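(* Let $1<r<\infty$ and let $X_n=(\mathbb{C}^n,\|\cdot\|)$ and $Y_n=(\mathbb{C}^n,\|\cdot\|)$ be Banach lattices with $M_{(r)}(X_n)=M^{(r)}(Y_n)=1$. Then for any index set $J\subset\mathbb{N}_0^n$, $$\boldsymbol{\chi_{\mathrm{mon}}}\big(\mathcal{P}_J(X_n)\big)\le\boldsymbol{\chi_{\mathrm{mon}}}\big(\mathcal{P}_J(Y_n)\big).$$
   Context: A Banach lattice $X_n=(\mathbb{C}^n,\|\cdot\|)$ is a norm with $\|z\|\le\|w\|$ whenever $|z_k|\le|w_k|$ for all $k$. The $r$-convexity constant $M^{(r)}(Y_n)$ is the least $C$ with $\|(\sum_k|x_k|^r)^{1/r}\|\le C(\sum_k\|x_k\|^r)^{1/r}$ for all finite families in $Y_n$; the $r$-concavity constant $M_{(r)}(X_n)$ is the least $C$ with $(\sum_k\|x_k\|^r)^{1/r}\le C\|(\sum_k|x_k|^r)^{1/r}\|$ (operations coordinatewise). $\mathcal{P}_J(X_n)$: polynomials $\sum_{\alpha\in J}c_\alpha z^\alpha$ with sup norm over the open unit ball. $\boldsymbol{\chi_{\mathrm{mon}}}(\mathcal{P}_J(X_n))$: least $K$ with $\|\sum\varepsilon_\alpha c_\alpha z^\alpha\|\le K\|\sum c_\alpha z^\alpha\|$ for all scalars and all $|\varepsilon_\alpha|=1$. *)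

theory Defs
  imports "HOL-Analysis.Analysis" "HOL-Library.Extended_Real"
begin

text \<open>Vectors in C^n are functions 'n => complex for a finite index type 'n
  (n = CARD('n)).  A Banach lattice norm on C^n is a norm that is monotone
  with respect to the coordinatewise modulus.\<close>

definition lattice_norm :: "(('n::finite \<Rightarrow> complex) \<Rightarrow> real) \<Rightarrow> bool" where
  "lattice_norm N \<longleftrightarrow>
     (\<forall>x. N x = 0 \<longleftrightarrow> x = (\<lambda>_. 0)) \<and>
     (\<forall>x y. N (\<lambda>i. x i + y i) \<le> N x + N y) \<and>
     (\<forall>c x. N (\<lambda>i. c * x i) = cmod c * N x) \<and>
     (\<forall>z w. (\<forall>k. cmod (z k) \<le> cmod (w k)) \<longrightarrow> N z \<le> N w)"

definition rsum_vec :: "real \<Rightarrow> nat \<Rightarrow> (nat \<Rightarrow> ('n \<Rightarrow> complex)) \<Rightarrow> ('n \<Rightarrow> complex)" where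
  "rsum_vec r m x = (\<lambda>i. complex_of_real ((\<Sum>k<m. cmod (x k i) powr r) powr (1/r)))"

text \<open>r-convexity constant M^(r): least C with
  ||(sum|x_k|^r)^(1/r)|| <= C (sum ||x_k||^r)^(1/r).\<close>

definition convexity_const :: "(('n::finite \<Rightarrow> complex) \<Rightarrow> real) \<Rightarrow> real \<Rightarrow> real" where
  "convexity_const N r = Inf {C. C \<ge> 0 \<and>
     (\<forall>m x. N (rsum_vec r m x) \<le> C * (\<Sum>k<m. N (x k) powr r) powr (1/r))}"

text \<open>r-concavity constant M_(r): least C with
  (sum ||x_k||^r)^(1/r) <= C ||(sum|x_k|^r)^(1/r)||.\<close>

definition concavity_const :: "(('n::finite \<Rightarrow> complex) \<Rightarrow> real) \<Rightarrow> real \<Rightarrow> real" where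
  "concavity_const N r = Inf {C. C \<ge> 0 \<and>
     (\<forall>m x. (\<Sum>k<m. N (x k) powr r) powr (1/r) \<le> C * N (rsum_vec r m x))}"

definition poly_eval :: "(('n::finite \<Rightarrow> nat) \<Rightarrow> complex) \<Rightarrow> ('n \<Rightarrow> nat) set \<Rightarrow> ('n \<Rightarrow> complex) \<Rightarrow> complex" where
  "poly_eval c F z = (\<Sum>\<alpha>\<in>F. c \<alpha> * (\<Prod>i\<in>UNIV. z i ^ \<alpha> i))"

definition poly_sup :: "(('n::finite \<Rightarrow> complex) \<Rightarrow> real) \<Rightarrow> (('n \<Rightarrow> nat) \<Rightarrow> complex) \<Rightarrow> ('n \<Rightarrow> nat) set \<Rightarrow> real" where
  "poly_sup N c F = Sup {cmod (poly_eval c F z) | z. N z < 1}"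

text \<open>Unconditional constant of the monomial basis of P_J(X_n), as an extended real
  (equal to infinity if no finite constant works).  Polynomials in P_J are the
  finite sums over finite F contained in J.\<close>

definition chi_mon :: "(('n::finite \<Rightarrow> complex) \<Rightarrow> real) \<Rightarrow> ('n \<Rightarrow> nat) set \<Rightarrow> ereal" where
  "chi_mon N J = Inf (ereal ` {K. K \<ge> 0 \<and>
     (\<forall>F c \<epsilon>. finite F \<longrightarrow> F \<subseteq> J \<longrightarrow> (\<forall>\<alpha>. cmod (\<epsilon> \<alpha>) = 1) \<longrightarrow>
        poly_sup N (\<lambda>\<alpha>. \<epsilon> \<alpha> * c \<alpha>) F \<le> K * poly_sup N c F)})"

end

theory Submission
  imports Defs
begin

text \<open>
  Write v |-> ||v^(1/r)||^r for the r-concavification of a lattice norm on the positive cone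
  of R^n. If M_(r)(X) = 1 it is superadditive for X, so by Hahn-Banach it is dominated by a
  positive linear functional w with w.|z|^r < 1 whenever ||z||_X < 1. If M^(r)(Y) = 1 it is
  subadditive for Y, and maximizing prod_i s_i^(p_i) over its unit ball (Lozanovskii) gives s
  with sum_i p_i y_i / s_i <= sum_i p_i on that ball. For p = w.|z|^r this factors z = a b with
  ||a||_Y < 1 and b multiplying the unit ball of Y into that of X. Substituting z = a b turns
  sum c_alpha z^alpha into a polynomial in a with coefficients c_alpha b^alpha, so every
  unconditional constant of the monomials in P_J(Y_n) is one for P_J(X_n).
\<close>

lemma lattice_norm_zero: "lattice_norm N \<Longrightarrow> N (\<lambda>_. 0) = 0"
  unfolding lattice_norm_def by auto

lemma lattice_norm_mono: "lattice_norm N \<Longrightarrow> (\<And>k. cmod (z k) \<le> cmod (w k)) \<Longrightarrow> N z \<le> N w"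
  unfolding lattice_norm_def by blast

lemma lattice_norm_scale: "lattice_norm N \<Longrightarrow> N (\<lambda>i. c * x i) = cmod c * N x"
  unfolding lattice_norm_def by blast

lemma lattice_norm_triangle: "lattice_norm N \<Longrightarrow> N (\<lambda>i. x i + y i) \<le> N x + N y"
  unfolding lattice_norm_def by blast

lemma lattice_norm_nonneg: "lattice_norm N \<Longrightarrow> 0 \<le> N x"
  using lattice_norm_mono[of N "\<lambda>_. 0" x] lattice_norm_zero[of N] by auto

lemma lattice_norm_pos: "lattice_norm N \<Longrightarrow> x \<noteq> (\<lambda>_. 0) \<Longrightarrow> 0 < N x"
  using lattice_norm_nonneg[of N x] unfolding lattice_norm_def by force

lemma lattice_norm_cmod: "lattice_norm N \<Longrightarrow> N (\<lambda>i. complex_of_real (cmod (x i))) = N x"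
  by (rule antisym; rule lattice_norm_mono; simp)

lemma lattice_norm_le_bound:
  assumes N: "lattice_norm N" and M: "\<And>i. cmod (x i) \<le> M"
  shows "N x \<le> M * N (\<lambda>_. 1)"
proof -
  have M0: "0 \<le> M" by (rule order_trans[OF norm_ge_zero M])
  have "N x \<le> N (\<lambda>i. complex_of_real M * 1)"
    by (rule lattice_norm_mono[OF N]) (use M M0 in auto)
  also have "\<dots> = M * N (\<lambda>_. 1)"
    using lattice_norm_scale[OF N, of "complex_of_real M" "\<lambda>_. 1"] M0 by simp
  finally show ?thesis .
qed

lemma lattice_norm_coords_bounded:
  fixes N :: "('n::finite \<Rightarrow> complex) \<Rightarrow> real"
  assumes N: "lattice_norm N"
  obtains C where "0 \<le> C" "\<And>x i. cmod (x i) \<le> C * N x"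
proof
  define e :: "'n \<Rightarrow> 'n \<Rightarrow> complex" where "e i = (\<lambda>j. if j = i then 1 else 0)" for i
  have e_pos: "0 < N (e i)" for i
    by (rule lattice_norm_pos[OF N]) (auto simp: e_def fun_eq_iff)
  show "0 \<le> (\<Sum>i\<in>UNIV. 1 / N (e i))"
    using e_pos by (simp add: sum_nonneg less_imp_le)
  fix x i
  have "cmod (x i) * N (e i) = N (\<lambda>j. x i * e i j)"
    using lattice_norm_scale[OF N] by simp
  also have "\<dots> \<le> N x"
    by (rule lattice_norm_mono[OF N]) (auto simp: e_def)
  finally have "cmod (x i) \<le> N x * (1 / N (e i))"
    using e_pos[of i] by (simp add: field_simps)
  also have "\<dots> \<le> N x * (\<Sum>i\<in>UNIV. 1 / N (e i))"
    using e_pos lattice_norm_nonneg[OF N]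
    by (intro mult_left_mono member_le_sum) (auto simp: less_imp_le)
  finally show "cmod (x i) \<le> (\<Sum>i\<in>UNIV. 1 / N (e i)) * N x"
    by (simp add: mult.commute)
qed

lemma lattice_norm_diff_le:
  assumes N: "lattice_norm N"
  shows "\<bar>N x - N y\<bar> \<le> (\<Sum>i\<in>UNIV. cmod (x i - y i)) * N (\<lambda>_. 1)"
proof -
  have "N x \<le> N y + N (\<lambda>i. x i - y i)" "N y \<le> N x + N (\<lambda>i. y i - x i)"
    using lattice_norm_triangle[OF N, of y "\<lambda>i. x i - y i"]
      lattice_norm_triangle[OF N, of x "\<lambda>i. y i - x i"] by simp_all
  moreover have "N (\<lambda>i. y i - x i) = N (\<lambda>i. x i - y i)"
    using lattice_norm_scale[OF N, of "-1" "\<lambda>i. x i - y i"] by simp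
  moreover have "N (\<lambda>i. x i - y i) \<le> (\<Sum>i\<in>UNIV. cmod (x i - y i)) * N (\<lambda>_. 1)"
    by (rule lattice_norm_le_bound[OF N]) (rule member_le_sum, auto)
  ultimately show ?thesis by linarith
qed

lemma tendsto_lattice_norm:
  assumes N: "lattice_norm N" and g: "\<And>i. ((\<lambda>v. g v i) \<longlongrightarrow> g0 i) F"
  shows "((\<lambda>v. N (g v)) \<longlongrightarrow> N g0) F"
proof -
  let ?bound = "\<lambda>v. (\<Sum>i\<in>UNIV. cmod (g v i - g0 i)) * N (\<lambda>_. 1)"
  have "\<forall>v. norm (N (g v) - N g0) \<le> ?bound v"
    using lattice_norm_diff_le[OF N] by simp
  moreover have "(?bound \<longlongrightarrow> (\<Sum>i\<in>UNIV. cmod (g0 i - g0 i)) * N (\<lambda>_. 1)) F"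
    by (intro tendsto_intros g)
  then have "(?bound \<longlongrightarrow> 0) F" by simp
  ultimately have "((\<lambda>v. N (g v) - N g0) \<longlongrightarrow> 0) F"
    by (rule Lim_null_comparison[OF always_eventually])
  then show ?thesis by (simp add: LIM_zero_iff)
qed

section \<open>Convexity and concavity constants equal to one\<close>

text \<open>The witness C0 is needed: the infimum of an empty set of reals is unspecified.\<close>

lemma le_if_Inf_constants_eq_1:
  fixes L R :: "'a \<Rightarrow> 'b \<Rightarrow> real"
  assumes Inf: "Inf {C. C \<ge> 0 \<and> (\<forall>m x. L m x \<le> C * R m x)} = 1"
    and C0: "0 \<le> C0" "\<forall>m x. L m x \<le> C0 * R m x" and R: "0 \<le> R m x"
  shows "L m x \<le> R m x"
proof (cases "R m x = 0")
  case True
  then show ?thesis using C0 by (metis mult_zero_right)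
next
  case False
  with R have R_pos: "0 < R m x" by simp
  have "L m x / R m x \<le> Inf {C. C \<ge> 0 \<and> (\<forall>m x. L m x \<le> C * R m x)}"
    by (rule cInf_greatest) (use C0 R_pos in \<open>auto simp: divide_le_eq\<close>)
  then show ?thesis using Inf R_pos by (simp add: divide_le_eq)
qed

lemma lattice_norm_powr_equiv:
  fixes N :: "('n::finite \<Rightarrow> complex) \<Rightarrow> real"
  assumes N: "lattice_norm N" and r: "0 < r"
  obtains A B where "0 \<le> A" "0 \<le> B"
    "\<And>x. N x powr r \<le> A * (\<Sum>i\<in>UNIV. cmod (x i) powr r)"
    "\<And>x. (\<Sum>i\<in>UNIV. cmod (x i) powr r) \<le> B * N x powr r"
proof -
  obtain C where C: "0 \<le> C" "\<And>x i. cmod (x i) \<le> C * N x"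
    using lattice_norm_coords_bounded[OF N] by blast
  have upper: "N x powr r \<le> N (\<lambda>_. 1) powr r * (\<Sum>i\<in>UNIV. cmod (x i) powr r)" for x
  proof -
    let ?S = "\<Sum>i\<in>UNIV. cmod (x i) powr r"
    have "cmod (x i) \<le> ?S powr (1/r)" for i
    proof -
      have "cmod (x i) = (cmod (x i) powr r) powr (1/r)" using r by (simp add: powr_powr)
      also have "\<dots> \<le> ?S powr (1/r)"
        using r by (intro powr_mono2 member_le_sum) auto
      finally show ?thesis .
    qed
    then have "N x \<le> ?S powr (1/r) * N (\<lambda>_. 1)" by (rule lattice_norm_le_bound[OF N])
    then have "N x powr r \<le> (?S powr (1/r) * N (\<lambda>_. 1)) powr r"
      using r lattice_norm_nonneg[OF N] by (intro powr_mono2) auto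
    also have "\<dots> = N (\<lambda>_. 1) powr r * ?S"
      using r lattice_norm_nonneg[OF N] by (simp add: powr_mult powr_powr sum_nonneg)
    finally show ?thesis .
  qed
  have lower: "(\<Sum>i\<in>UNIV. cmod (x i) powr r) \<le> real CARD('n) * C powr r * N x powr r" for x
  proof -
    have "(\<Sum>i\<in>UNIV. cmod (x i) powr r) \<le> (\<Sum>i::'n\<in>UNIV. (C * N x) powr r)"
      by (intro sum_mono powr_mono2) (use r C in auto)
    also have "\<dots> = real CARD('n) * C powr r * N x powr r"
      using C(1) lattice_norm_nonneg[OF N] by (simp add: powr_mult)
    finally show ?thesis .
  qed
  show ?thesis by (rule that[OF _ _ upper lower]) simp_all
qed

lemma sum_cmod_rsum_vec_powr:
  assumes "0 < r"
  shows "(\<Sum>i\<in>UNIV. cmod (rsum_vec r m x i) powr r) = (\<Sum>k<m. \<Sum>i\<in>UNIV. cmod (x k i) powr r)"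
  using assms by (simp add: rsum_vec_def powr_powr sum_nonneg sum.swap[of _ "{..<m}"])

lemma powr_one_div_le_mult:
  fixes a b c r :: real
  assumes "0 \<le> a" "0 \<le> b" "0 \<le> c" "0 < r" "a \<le> c * b"
  shows "a powr (1/r) \<le> c powr (1/r) * b powr (1/r)"
  using assms powr_mono2[of "1/r" a "c * b"] by (simp add: powr_mult)

lemma ex_concavity_constant:
  fixes N :: "('n::finite \<Rightarrow> complex) \<Rightarrow> real"
  assumes N: "lattice_norm N" and r: "0 < r"
  obtains C where "0 \<le> C"
    "\<And>m x. (\<Sum>k<m. N (x k) powr r) powr (1/r) \<le> C * N (rsum_vec r m x)"
proof -
  obtain A B where AB: "0 \<le> A" "0 \<le> B"
    "\<And>x. N x powr r \<le> A * (\<Sum>i\<in>UNIV. cmod (x i) powr r)"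
    "\<And>x. (\<Sum>i\<in>UNIV. cmod (x i) powr r) \<le> B * N x powr r"
    using lattice_norm_powr_equiv[OF N r] by blast
  have "(\<Sum>k<m. N (x k) powr r) \<le> (A * B) * N (rsum_vec r m x) powr r" for m x
  proof -
    have "(\<Sum>k<m. N (x k) powr r) \<le> (\<Sum>k<m. A * (\<Sum>i\<in>UNIV. cmod (x k i) powr r))"
      by (intro sum_mono AB(3))
    also have "\<dots> = A * (\<Sum>i\<in>UNIV. cmod (rsum_vec r m x i) powr r)"
      by (simp add: sum_cmod_rsum_vec_powr[OF r] sum_distrib_left)
    also have "\<dots> \<le> A * (B * N (rsum_vec r m x) powr r)"
      by (intro mult_left_mono AB) 
    finally show ?thesis by (simp add: mult.assoc)
  qed
  then have "(\<Sum>k<m. N (x k) powr r) powr (1/r) \<le> (A * B) powr (1/r) * N (rsum_vec r m x)" for m x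
    using powr_one_div_le_mult[OF _ _ _ r, of "\<Sum>k<m. N (x k) powr r" "N (rsum_vec r m x) powr r" "A * B"]
      r AB lattice_norm_nonneg[OF N] by (simp add: sum_nonneg powr_powr)
  then show ?thesis by (intro that[of "(A * B) powr (1/r)"]) simp_all
qed

lemma ex_convexity_constant:
  fixes N :: "('n::finite \<Rightarrow> complex) \<Rightarrow> real"
  assumes N: "lattice_norm N" and r: "0 < r"
  obtains C where "0 \<le> C"
    "\<And>m x. N (rsum_vec r m x) \<le> C * (\<Sum>k<m. N (x k) powr r) powr (1/r)"
proof -
  obtain A B where AB: "0 \<le> A" "0 \<le> B"
    "\<And>x. N x powr r \<le> A * (\<Sum>i\<in>UNIV. cmod (x i) powr r)"
    "\<And>x. (\<Sum>i\<in>UNIV. cmod (x i) powr r) \<le> B * N x powr r"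
    using lattice_norm_powr_equiv[OF N r] by blast
  have "N (rsum_vec r m x) powr r \<le> (A * B) * (\<Sum>k<m. N (x k) powr r)" for m x
  proof -
    have "N (rsum_vec r m x) powr r \<le> A * (\<Sum>i\<in>UNIV. cmod (rsum_vec r m x i) powr r)"
      by (rule AB(3))
    also have "\<dots> = A * (\<Sum>k<m. \<Sum>i\<in>UNIV. cmod (x k i) powr r)"
      by (simp add: sum_cmod_rsum_vec_powr[OF r])
    also have "\<dots> \<le> A * (\<Sum>k<m. B * N (x k) powr r)"
      by (intro mult_left_mono sum_mono AB)
    finally show ?thesis by (simp add: sum_distrib_left mult.assoc)
  qed
  then have "N (rsum_vec r m x) \<le> (A * B) powr (1/r) * (\<Sum>k<m. N (x k) powr r) powr (1/r)" for m x
    using powr_one_div_le_mult[OF _ _ _ r, of "N (rsum_vec r m x) powr r" "\<Sum>k<m. N (x k) powr r" "A * B"]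
      r AB lattice_norm_nonneg[OF N] by (simp add: sum_nonneg powr_powr)
  then show ?thesis by (intro that[of "(A * B) powr (1/r)"]) simp_all
qed

lemma r_concave_if_concavity_const_eq_1:
  fixes N :: "('n::finite \<Rightarrow> complex) \<Rightarrow> real"
  assumes N: "lattice_norm N" and r: "0 < r" and "concavity_const N r = 1"
  shows "(\<Sum>k<m. N (x k) powr r) powr (1/r) \<le> N (rsum_vec r m x)"
proof -
  obtain C where "0 \<le> C" "\<forall>m x. (\<Sum>k<m. N (x k) powr r) powr (1/r) \<le> C * N (rsum_vec r m x)"
    using ex_concavity_constant[OF N r] by blast
  then show ?thesis
    using assms(3) lattice_norm_nonneg[OF N] unfolding concavity_const_def
    by (intro le_if_Inf_constants_eq_1[where L = "\<lambda>m x. (\<Sum>k<m. N (x k) powr r) powr (1/r)"])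
qed

lemma r_convex_if_convexity_const_eq_1:
  fixes N :: "('n::finite \<Rightarrow> complex) \<Rightarrow> real"
  assumes N: "lattice_norm N" and r: "0 < r" and "convexity_const N r = 1"
  shows "N (rsum_vec r m x) \<le> (\<Sum>k<m. N (x k) powr r) powr (1/r)"
proof -
  obtain C where "0 \<le> C" "\<forall>m x. N (rsum_vec r m x) \<le> C * (\<Sum>k<m. N (x k) powr r) powr (1/r)"
    using ex_convexity_constant[OF N r] by blast
  then show ?thesis
    using assms(3) unfolding convexity_const_def
    by (intro le_if_Inf_constants_eq_1[where L = "\<lambda>m x. N (rsum_vec r m x)"]) auto
qed

section \<open>The r-concavification\<close>

text \<open>
  Nonnegative vectors are taken in real^'n so that the convex geometry of Euclidean space is
  available; for vectors with negative entries root_vec and concavify are junk.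
\<close>

definition root_vec :: "real \<Rightarrow> real^'n \<Rightarrow> ('n::finite \<Rightarrow> complex)" where
  "root_vec r v = (\<lambda>i. complex_of_real (v$i powr (1/r)))"

definition concavify :: "(('n::finite \<Rightarrow> complex) \<Rightarrow> real) \<Rightarrow> real \<Rightarrow> real^'n \<Rightarrow> real" where
  "concavify N r v = N (root_vec r v) powr r"

lemma concavify_nonneg: "0 \<le> concavify N r v"
  by (simp add: concavify_def)

lemma concavify_scale:
  assumes N: "lattice_norm N" and r: "0 < r" and c: "0 \<le> c" and v: "0 \<le> v"
  shows "concavify N r (c *\<^sub>R v) = c * concavify N r v"
proof -
  have "root_vec r (c *\<^sub>R v) = (\<lambda>i. complex_of_real (c powr (1/r)) * root_vec r v i)"
    using c v by (auto simp: root_vec_def less_eq_vec_def powr_mult fun_eq_iff)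
  then have "N (root_vec r (c *\<^sub>R v)) = c powr (1/r) * N (root_vec r v)"
    using lattice_norm_scale[OF N] by simp
  then show ?thesis
    using c r lattice_norm_nonneg[OF N] by (simp add: concavify_def powr_mult powr_powr)
qed

lemma concavify_mono:
  assumes N: "lattice_norm N" and r: "0 < r" and "0 \<le> v" "v \<le> u"
  shows "concavify N r v \<le> concavify N r u"
proof -
  have "N (root_vec r v) \<le> N (root_vec r u)"
    by (rule lattice_norm_mono[OF N])
      (use assms in \<open>auto simp: root_vec_def less_eq_vec_def intro!: powr_mono2\<close>)
  then show ?thesis
    using r lattice_norm_nonneg[OF N] by (simp add: concavify_def powr_mono2)
qed

lemma concavify_cmod_powr:
  assumes N: "lattice_norm N" and r: "0 < r"
  shows "concavify N r (\<chi> i. cmod (z i) powr r) = N z powr r"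
proof -
  have "root_vec r (\<chi> i. cmod (z i) powr r) = (\<lambda>i. complex_of_real (cmod (z i)))"
    using r by (auto simp: root_vec_def powr_powr fun_eq_iff)
  then show ?thesis by (simp add: concavify_def lattice_norm_cmod[OF N])
qed

lemma concavify_pos:
  assumes N: "lattice_norm N" and r: "0 < r" and v: "0 \<le> v" "v \<noteq> 0"
  shows "0 < concavify N r v"
proof -
  obtain i where "v$i \<noteq> 0" using v(2) by (metis vec_eq_iff zero_index)
  then have "root_vec r v \<noteq> (\<lambda>_. 0)" by (auto simp: root_vec_def fun_eq_iff dest!: spec[of _ i])
  then have "0 < N (root_vec r v)" by (rule lattice_norm_pos[OF N])
  then show ?thesis by (simp add: concavify_def)
qed

lemma concavify_axis_pos:
  assumes N: "lattice_norm N" and r: "0 < r"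
  shows "0 < concavify N r (axis i 1)"
  by (rule concavify_pos[OF N r]) (auto simp: less_eq_vec_def axis_def vec_eq_iff)

lemma concavify_coord_le:
  assumes N: "lattice_norm N" and r: "0 < r" and v: "0 \<le> v"
  shows "v$i * concavify N r (axis i 1) \<le> concavify N r v"
proof -
  have "v$i * concavify N r (axis i 1) = concavify N r (v$i *\<^sub>R axis i 1)"
    using concavify_scale[OF N r, of "v$i" "axis i 1"] v
    by (auto simp: less_eq_vec_def axis_def)
  also have "\<dots> \<le> concavify N r v"
    by (rule concavify_mono[OF N r]) (use v in \<open>auto simp: less_eq_vec_def axis_def\<close>)
  finally show ?thesis .
qed

lemma closed_nonneg_vec: "closed {v :: real^'n::finite. 0 \<le> v}"
  using closed_interval_right_cart[of 0] by (simp add: less_eq_vec_def)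

lemma continuous_on_concavify:
  fixes N :: "('n::finite \<Rightarrow> complex) \<Rightarrow> real"
  assumes N: "lattice_norm N" and r: "0 < r"
  shows "continuous_on {v. 0 \<le> v} (concavify N r)"
  unfolding continuous_on_def
proof
  fix v0 :: "real^'n" assume "v0 \<in> {v. 0 \<le> v}"
  let ?F = "at v0 within {v. 0 \<le> v}"
  have nonneg: "eventually (\<lambda>v. 0 \<le> v$i) ?F" for i
    by (auto simp: eventually_at_filter less_eq_vec_def)
  have "((\<lambda>v. N (root_vec r v)) \<longlongrightarrow> N (root_vec r v0)) ?F"
    unfolding root_vec_def
  proof (rule tendsto_lattice_norm[OF N])
    fix i
    have "((\<lambda>v. v$i powr (1/r)) \<longlongrightarrow> v0$i powr (1/r)) ?F"
      by (rule tendsto_powr'[OF tendsto_vec_nth[OF tendsto_ident_at] tendsto_const])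
        (use nonneg r in auto)
    then show "((\<lambda>v. complex_of_real (v$i powr (1/r))) \<longlongrightarrow> complex_of_real (v0$i powr (1/r))) ?F"
      by (rule tendsto_of_real)
  qed
  then show "(concavify N r \<longlongrightarrow> concavify N r v0) ?F"
    unfolding concavify_def using r lattice_norm_nonneg[OF N]
    by (intro tendsto_powr') (auto intro: always_eventually)
qed

lemma rsum_vec_root_vec:
  assumes r: "0 < r" and "0 \<le> v" "0 \<le> u"
  shows "rsum_vec r 2 (\<lambda>k. if k = 0 then root_vec r v else root_vec r u) = root_vec r (v + u)"
  using assms
  by (auto simp: rsum_vec_def root_vec_def fun_eq_iff numeral_2_eq_2 lessThan_Suc
      less_eq_vec_def powr_powr add.commute)

lemma concavify_superadditive:
  assumes N: "lattice_norm N" and r: "0 < r" and c: "concavity_const N r = 1"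
    and vu: "0 \<le> v" "0 \<le> u"
  shows "concavify N r v + concavify N r u \<le> concavify N r (v + u)"
proof -
  have "(concavify N r v + concavify N r u) powr (1/r) \<le> N (root_vec r (v + u))"
    using r_concave_if_concavity_const_eq_1[OF N r c, where m = 2 and x = "\<lambda>k. if k = 0 then root_vec r v else root_vec r u"]
    unfolding rsum_vec_root_vec[OF r vu] by (simp add: concavify_def numeral_2_eq_2 add.commute)
  then have "((concavify N r v + concavify N r u) powr (1/r)) powr r \<le> N (root_vec r (v + u)) powr r"
    using r by (intro powr_mono2) auto
  then show ?thesis
    using r by (simp add: powr_powr concavify_def add_nonneg_nonneg)
qed

lemma concavify_subadditive:
  assumes N: "lattice_norm N" and r: "0 < r" and c: "convexity_const N r = 1"
    and vu: "0 \<le> v" "0 \<le> u"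
  shows "concavify N r (v + u) \<le> concavify N r v + concavify N r u"
proof -
  have "N (root_vec r (v + u)) \<le> (concavify N r v + concavify N r u) powr (1/r)"
    using r_convex_if_convexity_const_eq_1[OF N r c, where m = 2 and x = "\<lambda>k. if k = 0 then root_vec r v else root_vec r u"]
    unfolding rsum_vec_root_vec[OF r vu] by (simp add: concavify_def numeral_2_eq_2 add.commute)
  then have "N (root_vec r (v + u)) powr r \<le> ((concavify N r v + concavify N r u) powr (1/r)) powr r"
    using r lattice_norm_nonneg[OF N] by (intro powr_mono2) auto
  then show ?thesis
    using r by (simp add: powr_powr concavify_def add_nonneg_nonneg)
qed

section \<open>Dominating functionals and Lozanovskii's factorization\<close>

lemma inner_nonneg_vec: "0 \<le> a \<Longrightarrow> 0 \<le> x \<Longrightarrow> 0 \<le> inner a (x :: real^'n::finite)"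
  by (auto simp: inner_vec_def less_eq_vec_def intro: sum_nonneg)

lemma concavify_normalize:
  assumes N: "lattice_norm N" and r: "0 < r" and "0 \<le> v" "0 < concavify N r v"
  shows "concavify N r ((1 / concavify N r v) *\<^sub>R v) = 1"
  using concavify_scale[OF N r, of "1 / concavify N r v" v] assms by simp

lemma convex_concavify_superlevel:
  fixes N :: "('n::finite \<Rightarrow> complex) \<Rightarrow> real"
  assumes N: "lattice_norm N" and r: "0 < r"
    and superadditive: "\<And>v u. 0 \<le> v \<Longrightarrow> 0 \<le> u \<Longrightarrow>
      concavify N r v + concavify N r u \<le> concavify N r (v + u)"
  shows "convex {v. 0 \<le> v \<and> 1 \<le> concavify N r v}"
  unfolding convex_def
proof (intro ballI allI impI, clarify)
  fix x y :: "real^'n" and a b :: real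
  assume xy: "0 \<le> x" "1 \<le> concavify N r x" "0 \<le> y" "1 \<le> concavify N r y"
    and ab: "0 \<le> a" "0 \<le> b" "a + b = 1"
  have nonneg: "0 \<le> a *\<^sub>R x" "0 \<le> b *\<^sub>R y"
    using xy ab by (simp_all add: less_eq_vec_def)
  have "1 = a * 1 + b * 1" using ab by simp
  also have "\<dots> \<le> a * concavify N r x + b * concavify N r y"
    using xy ab by (intro add_mono mult_left_mono) auto
  also have "\<dots> = concavify N r (a *\<^sub>R x) + concavify N r (b *\<^sub>R y)"
    using concavify_scale[OF N r] ab xy by simp
  also have "\<dots> \<le> concavify N r (a *\<^sub>R x + b *\<^sub>R y)"
    using superadditive[OF nonneg] .
  finally show "0 \<le> a *\<^sub>R x + b *\<^sub>R y \<and> 1 \<le> concavify N r (a *\<^sub>R x + b *\<^sub>R y)"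
    using nonneg by simp
qed

lemma nonneg_if_bounded_below_on_ray:
  fixes a b c0 :: real
  assumes "\<And>c. c0 \<le> c \<Longrightarrow> b < c * a"
  shows "0 \<le> a"
proof (rule ccontr)
  assume neg: "\<not> 0 \<le> a"
  define c where "c = max c0 ((\<bar>b\<bar> + 1) / - a)"
  have "b < c * a" by (rule assms) (simp add: c_def)
  also have "\<dots> \<le> (\<bar>b\<bar> + 1) / - a * a"
    using neg by (intro mult_right_mono_neg) (auto simp: c_def)
  finally show False using neg by simp
qed

lemma separating_functional_nonneg:
  fixes N :: "('n::finite \<Rightarrow> complex) \<Rightarrow> real"
  assumes N: "lattice_norm N" and r: "0 < r"
    and separates: "\<And>x. 0 \<le> x \<Longrightarrow> 1 \<le> concavify N r x \<Longrightarrow> b < inner a x"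
  shows "0 \<le> a$j"
proof (rule nonneg_if_bounded_below_on_ray)
  fix c assume c: "1 / concavify N r (axis j 1) \<le> c"
  have pos: "0 < concavify N r (axis j 1)" by (rule concavify_axis_pos[OF N r])
  then have "0 \<le> c" by (intro order_trans[OF _ c]) simp
  moreover have "1 \<le> c * concavify N r (axis j 1)" using c pos by (simp add: divide_le_eq)
  ultimately have "b < inner a (c *\<^sub>R axis j 1)"
    using concavify_scale[OF N r, of c "axis j 1"]
    by (intro separates) (simp_all add: less_eq_vec_def axis_def)
  then show "b < c * a$j" by (simp add: inner_axis)
qed

lemma concavify_dominated_by_linear:
  fixes N :: "('n::finite \<Rightarrow> complex) \<Rightarrow> real"
  assumes N: "lattice_norm N" and r: "0 < r"
    and superadditive: "\<And>v u. 0 \<le> v \<Longrightarrow> 0 \<le> u \<Longrightarrow>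
      concavify N r v + concavify N r u \<le> concavify N r (v + u)"
    and t: "0 \<le> t" "concavify N r t < 1"
  obtains w where "\<And>i. 0 < w$i" "inner w t < 1" "\<And>y. 0 \<le> y \<Longrightarrow> concavify N r y \<le> inner w y"
proof -
  define U where "U = {v. 0 \<le> v \<and> 1 \<le> concavify N r v}"
  have "closed U" unfolding U_def
    using continuous_on_closed_Collect_le[OF continuous_on_const continuous_on_concavify[OF N r]
        closed_nonneg_vec] by simp
  moreover have "t \<notin> U" using t by (simp add: U_def)
  ultimately obtain a b where ab: "inner a t < b" "\<forall>x\<in>U. b < inner a x"
    using separating_hyperplane_closed_point convex_concavify_superlevel[OF N r superadditive]
    unfolding U_def by blast
  have "0 \<le> a$j" for j
    using ab(2) by (intro separating_functional_nonneg[OF N r, of b]) (simp add: U_def)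
  then have "0 < b"
    using ab(1) inner_nonneg_vec[of a t] t(1) by (simp add: less_eq_vec_def)
  define w where "w = (1 / b) *\<^sub>R a"
  have dominated: "concavify N r y \<le> inner w y" if y: "0 \<le> y" for y
  proof (cases "concavify N r y = 0")
    case True
    then show ?thesis
      using y \<open>\<And>j. 0 \<le> a$j\<close> \<open>0 < b\<close> inner_nonneg_vec[of w y] by (simp add: w_def less_eq_vec_def)
  next
    case False
    then have pos: "0 < concavify N r y" using concavify_nonneg[of N r y] by simp
    then have "(1 / concavify N r y) *\<^sub>R y \<in> U"
      using concavify_normalize[OF N r y] y by (simp add: U_def less_eq_vec_def)
    then have "b < inner a y / concavify N r y" using ab(2) by auto
    then show ?thesis using pos \<open>0 < b\<close> by (simp add: w_def field_simps)
  qed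
  show ?thesis
  proof (rule that)
    fix i
    have "0 \<le> (axis i 1 :: real^'n)" by (simp add: less_eq_vec_def axis_def)
    then show "0 < w$i"
      using dominated concavify_axis_pos[OF N r, of i] by (fastforce simp: inner_axis)
    show "inner w t < 1" using ab(1) \<open>0 < b\<close> by (simp add: w_def)
  qed (rule dominated)
qed

lemma compact_concavify_unit_ball:
  fixes N :: "('n::finite \<Rightarrow> complex) \<Rightarrow> real"
  assumes N: "lattice_norm N" and r: "0 < r"
  shows "compact {v. 0 \<le> v \<and> concavify N r v \<le> 1}"
proof -
  have "closed {v. 0 \<le> v \<and> concavify N r v \<le> 1}"
    using continuous_on_closed_Collect_le[OF continuous_on_concavify[OF N r] continuous_on_const
        closed_nonneg_vec] by simp
  moreover have "{v. 0 \<le> v \<and> concavify N r v \<le> 1} \<subseteq> cbox 0 (\<chi> i. 1 / concavify N r (axis i 1))"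
  proof clarify
    fix v :: "real^'n" assume v: "0 \<le> v" "concavify N r v \<le> 1"
    have "v$i \<le> 1 / concavify N r (axis i 1)" for i
      using concavify_coord_le[OF N r v(1), of i] v(2) concavify_axis_pos[OF N r, of i]
      by (simp add: le_divide_eq)
    then show "v \<in> cbox 0 (\<chi> i. 1 / concavify N r (axis i 1))"
      using v(1) by (simp add: mem_box_cart less_eq_vec_def)
  qed
  ultimately show ?thesis
    using bounded_subset[OF bounded_cbox] by (auto simp: compact_eq_bounded_closed)
qed

lemma convex_concavify_unit_ball:
  fixes N :: "('n::finite \<Rightarrow> complex) \<Rightarrow> real"
  assumes N: "lattice_norm N" and r: "0 < r"
    and subadditive: "\<And>v u. 0 \<le> v \<Longrightarrow> 0 \<le> u \<Longrightarrow>
      concavify N r (v + u) \<le> concavify N r v + concavify N r u"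
  shows "convex {v. 0 \<le> v \<and> concavify N r v \<le> 1}"
  unfolding convex_def
proof (intro ballI allI impI, clarify)
  fix x y :: "real^'n" and a b :: real
  assume xy: "0 \<le> x" "concavify N r x \<le> 1" "0 \<le> y" "concavify N r y \<le> 1"
    and ab: "0 \<le> a" "0 \<le> b" "a + b = 1"
  have nonneg: "0 \<le> a *\<^sub>R x" "0 \<le> b *\<^sub>R y"
    using xy ab by (simp_all add: less_eq_vec_def)
  have "concavify N r (a *\<^sub>R x + b *\<^sub>R y) \<le> concavify N r (a *\<^sub>R x) + concavify N r (b *\<^sub>R y)"
    using subadditive[OF nonneg] .
  also have "\<dots> = a * concavify N r x + b * concavify N r y"
    using concavify_scale[OF N r] ab xy by simp
  also have "\<dots> \<le> a * 1 + b * 1"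
    using xy ab by (intro add_mono mult_left_mono) auto
  finally show "0 \<le> a *\<^sub>R x + b *\<^sub>R y \<and> concavify N r (a *\<^sub>R x + b *\<^sub>R y) \<le> 1"
    using nonneg ab by simp
qed

lemma ln_prod_powr:
  fixes f g :: "'a \<Rightarrow> real"
  assumes "finite S" "\<And>i. i \<in> S \<Longrightarrow> 0 < f i"
  shows "ln (\<Prod>i\<in>S. f i powr g i) = (\<Sum>i\<in>S. g i * ln (f i))"
  using assms by (subst ln_prod) (force simp: ln_powr)+

lemma maximizer_of_prod_powr:
  fixes K :: "(real^'n::finite) set" and S :: "'n set" and p s y :: "real^'n"
  assumes "convex K" "s \<in> K" "y \<in> K" "0 \<le> y"
    and s_pos: "\<And>i. i \<in> S \<Longrightarrow> 0 < s$i"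
    and max: "\<And>x. x \<in> K \<Longrightarrow> (\<Prod>i\<in>S. x$i powr p$i) \<le> (\<Prod>i\<in>S. s$i powr p$i)"
  shows "(\<Sum>i\<in>S. p$i * y$i / s$i) \<le> (\<Sum>i\<in>S. p$i)"
proof -
  define L where "L h = (\<Sum>i\<in>S. p$i * ln (s$i + h * (y$i - s$i)))" for h
  define D where "D = (\<Sum>i\<in>S. p$i * ((y$i - s$i) / s$i))"
  have "p$i * ((y$i - s$i) / s$i) = p$i * y$i / s$i - p$i" if "i \<in> S" for i
    using s_pos[OF that] by (simp add: field_simps)
  then have D: "D = (\<Sum>i\<in>S. p$i * y$i / s$i) - (\<Sum>i\<in>S. p$i)"
    unfolding D_def sum_subtractf[symmetric] by (rule sum.cong[OF refl])
  have "D \<le> 0"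
  proof (rule ccontr)
    assume "\<not> D \<le> 0"
    then have "0 < D" by simp
    have der: "(L has_real_derivative D) (at 0)"
      unfolding L_def D_def
      by (auto intro!: derivative_eq_intros sum.cong simp: s_pos mult.commute)
    then obtain d where d: "0 < d" "\<And>h. 0 < h \<Longrightarrow> h < d \<Longrightarrow> L 0 < L h"
      using DERIV_pos_inc_right[OF der \<open>0 < D\<close>] by auto
    define h where "h = min (d/2) (1/2)"
    have h: "0 < h" "h < d" "h < 1" using d by (auto simp: h_def)
    define x where "x = (1 - h) *\<^sub>R s + h *\<^sub>R y"
    have "x \<in> K" unfolding x_def using assms(1-3) h by (intro convexD) auto
    have x_i: "x$i = s$i + h * (y$i - s$i)" for i by (simp add: x_def algebra_simps)
    have x_pos: "0 < x$i" if "i \<in> S" for i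
    proof -
      have "0 < (1 - h) * s$i" using s_pos[OF that] h by simp
      moreover have "0 \<le> h * y$i" using h \<open>0 \<le> y\<close> by (simp add: less_eq_vec_def)
      ultimately show ?thesis by (simp add: x_def)
    qed
    have prod_pos: "0 < (\<Prod>i\<in>S. v$i powr p$i)"
      if "\<And>i. i \<in> S \<Longrightarrow> 0 < v$i" for v :: "real^'n"
      by (intro prod_pos) (auto dest: that)
    have "L h = (\<Sum>i\<in>S. p$i * ln (x$i))" by (simp add: L_def x_i)
    also have "\<dots> = ln (\<Prod>i\<in>S. x$i powr p$i)" by (rule ln_prod_powr[symmetric]) (simp_all add: x_pos)
    also have "\<dots> \<le> ln (\<Prod>i\<in>S. s$i powr p$i)"
      using max[OF \<open>x \<in> K\<close>] prod_pos[OF x_pos] prod_pos[OF s_pos] by simp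
    also have "\<dots> = L 0" by (simp add: ln_prod_powr s_pos L_def)
    finally show False using d(2)[OF h(1,2)] by simp
  qed
  then show ?thesis using D by simp
qed

text \<open>
  The vector s maximizes prod_i s_i^(p_i) over the unit ball; the inequality is the first-order
  condition at this maximum.
\<close>

lemma concavify_lozanovskii:
  fixes N :: "('n::finite \<Rightarrow> complex) \<Rightarrow> real"
  assumes N: "lattice_norm N" and r: "0 < r"
    and subadditive: "\<And>v u. 0 \<le> v \<Longrightarrow> 0 \<le> u \<Longrightarrow>
      concavify N r (v + u) \<le> concavify N r v + concavify N r u"
    and p: "0 \<le> p"
  obtains s where "concavify N r s \<le> 1" "\<And>i. 0 < p$i \<Longrightarrow> 0 < s$i"
    "\<And>y. 0 \<le> y \<Longrightarrow> concavify N r y \<le> 1 \<Longrightarrow>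
      (\<Sum>i | 0 < p$i. p$i * y$i / s$i) \<le> (\<Sum>i\<in>UNIV. p$i)"
proof -
  define K where "K = {v. 0 \<le> v \<and> concavify N r v \<le> 1}"
  define S where "S = {i. 0 < p$i}"
  define G where "G v = (\<Prod>i\<in>S. v$i powr p$i)" for v :: "real^'n"
  have "continuous_on K G" unfolding G_def
    by (intro continuous_on_prod continuous_on_powr' continuous_intros)
      (auto simp: K_def S_def less_eq_vec_def)
  define u :: "real^'n" where "u = (1 / concavify N r 1) *\<^sub>R 1"
  have "0 < concavify N r 1"
    by (rule concavify_pos[OF N r]) (auto simp: less_eq_vec_def vec_eq_iff)
  then have "u \<in> K" "0 < G u"
    using concavify_normalize[OF N r, of 1]
    by (auto simp: K_def u_def G_def less_eq_vec_def intro!: prod_pos)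
  then obtain s where s: "s \<in> K" "\<And>v. v \<in> K \<Longrightarrow> G v \<le> G s"
    using continuous_attains_sup[OF compact_concavify_unit_ball[OF N r, folded K_def] _
        \<open>continuous_on K G\<close>] by blast
  have s_pos: "0 < s$i" if "i \<in> S" for i
  proof (rule ccontr)
    assume "\<not> 0 < s$i"
    then have "s$i = 0" using s(1) by (auto simp: K_def less_eq_vec_def intro: antisym)
    then have "G s = 0" unfolding G_def using that by (intro prod_zero) auto
    then show False using s(2)[OF \<open>u \<in> K\<close>] \<open>0 < G u\<close> by simp
  qed
  have "(\<Sum>i\<in>UNIV. p$i) = (\<Sum>i\<in>S. p$i)"
    using p by (intro sum.mono_neutral_right) (auto simp: S_def less_eq_vec_def intro: antisym)
  then have "(\<Sum>i\<in>S. p$i * y$i / s$i) \<le> (\<Sum>i\<in>UNIV. p$i)"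
    if "0 \<le> y" "concavify N r y \<le> 1" for y
    using maximizer_of_prod_powr[OF convex_concavify_unit_ball[OF N r subadditive, folded K_def]
        s(1) _ that(1) s_pos] s(2) that unfolding K_def G_def by auto
  then show ?thesis
    using that s s_pos unfolding K_def S_def by auto
qed

lemma powr_less_1_iff: "0 \<le> x \<Longrightarrow> 0 < a \<Longrightarrow> x powr a < 1 \<longleftrightarrow> x < (1::real)"
  using powr_less_mono2[of a x 1] powr_mono2[of a 1 x] by force

definition unit_ball_factors ::
    "(('n::finite \<Rightarrow> complex) \<Rightarrow> real) \<Rightarrow> (('n \<Rightarrow> complex) \<Rightarrow> real) \<Rightarrow> bool" where
  "unit_ball_factors X Y \<longleftrightarrow> (\<forall>z. X z < 1 \<longrightarrow> (\<exists>a b. Y a < 1 \<and>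
     (\<forall>u. Y u < 1 \<longrightarrow> X (\<lambda>i. b i * u i) < 1) \<and> z = (\<lambda>i. a i * b i)))"

lemma concavify_dominated_powr_le:
  assumes X: "lattice_norm X" and r: "0 < r"
    and dominated: "\<And>y. 0 \<le> y \<Longrightarrow> concavify X r y \<le> inner w y"
  shows "X x powr r \<le> (\<Sum>i\<in>UNIV. w$i * cmod (x i) powr r)"
proof -
  have "X x powr r = concavify X r (\<chi> i. cmod (x i) powr r)"
    by (rule concavify_cmod_powr[OF X r, symmetric])
  also have "\<dots> \<le> inner w (\<chi> i. cmod (x i) powr r)"
    by (rule dominated) (simp add: less_eq_vec_def)
  finally show ?thesis by (simp add: inner_vec_def)
qed

lemma lattice_norm_scaled_root_vec_less_1:
  assumes Y: "lattice_norm Y" and r: "0 < r" and s: "concavify Y r s \<le> 1"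
    and c: "0 \<le> c" "c < 1"
  shows "Y (\<lambda>i. complex_of_real c * root_vec r s i) < 1"
proof -
  have "Y (root_vec r s) = concavify Y r s powr (1/r)"
    using r lattice_norm_nonneg[OF Y] by (simp add: concavify_def powr_powr)
  also have "\<dots> \<le> 1" using s r by (simp add: powr_le1 concavify_nonneg)
  finally have "c * Y (root_vec r s) \<le> c" using c(1) by (simp add: mult_left_le)
  then show ?thesis using c lattice_norm_scale[OF Y] by simp
qed

text \<open>
  With p_i = w_i |z_i|^r, the choice a = (mu s)^(1/r) with lam < mu < 1 makes
  w_i |b_i|^r = p_i / (mu s_i) on the support of z.
\<close>

lemma factorization_from_dual_data:
  fixes X Y :: "('n::finite \<Rightarrow> complex) \<Rightarrow> real" and w s :: "real^'n"
  assumes X: "lattice_norm X" and Y: "lattice_norm Y" and r: "0 < r"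
    and w: "\<And>i. 0 < w$i" "(\<Sum>i\<in>UNIV. w$i * cmod (z i) powr r) < 1"
    and dominated: "\<And>y. 0 \<le> y \<Longrightarrow> concavify X r y \<le> inner w y"
    and s: "concavify Y r s \<le> 1" "\<And>i. z i \<noteq> 0 \<Longrightarrow> 0 < s$i"
    and lozanovskii: "\<And>y. 0 \<le> y \<Longrightarrow> concavify Y r y \<le> 1 \<Longrightarrow>
      (\<Sum>i | z i \<noteq> 0. w$i * cmod (z i) powr r * y$i / s$i) \<le> (\<Sum>i\<in>UNIV. w$i * cmod (z i) powr r)"
  shows "\<exists>a b. Y a < 1 \<and> (\<forall>u. Y u < 1 \<longrightarrow> X (\<lambda>i. b i * u i) < 1) \<and> z = (\<lambda>i. a i * b i)"
proof -
  define lam where "lam = (\<Sum>i\<in>UNIV. w$i * cmod (z i) powr r)"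
  define mu where "mu = (1 + lam) / 2"
  have "0 \<le> lam" using w(1) by (simp add: lam_def sum_nonneg less_imp_le)
  then have mu: "0 < mu" "mu < 1" "lam < mu" using w(2) by (auto simp: mu_def lam_def)
  define a where "a = (\<lambda>i. complex_of_real (mu powr (1/r)) * root_vec r s i)"
  define b where "b i = (if z i = 0 then 0 else z i / a i)" for i
  have "Y a < 1"
    unfolding a_def using mu r
    by (intro lattice_norm_scaled_root_vec_less_1[OF Y r s(1)]) (simp_all add: powr_less_1_iff)
  moreover have "X (\<lambda>i. b i * u i) < 1" if u: "Y u < 1" for u
  proof -
    define y :: "real^'n" where "y = (\<chi> i. cmod (u i) powr r)"
    have y: "0 \<le> y" "concavify Y r y \<le> 1"
      using u r lattice_norm_nonneg[OF Y] by (simp_all add: y_def less_eq_vec_def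
          concavify_cmod_powr[OF Y r] powr_le1)
    have b_coeff: "w$i * cmod (b i) powr r =
        (if z i = 0 then 0 else w$i * cmod (z i) powr r / (mu * s$i))" for i
    proof (cases "z i = 0")
      case False
      then show ?thesis
        using s(2)[OF False] mu r
        by (simp add: b_def a_def root_vec_def norm_divide norm_mult powr_divide powr_mult powr_powr)
    qed (use r in \<open>simp add: b_def\<close>)
    have "X (\<lambda>i. b i * u i) powr r \<le> (\<Sum>i\<in>UNIV. w$i * cmod (b i * u i) powr r)"
      by (rule concavify_dominated_powr_le[OF X r dominated])
    also have "\<dots> = (\<Sum>i\<in>UNIV. (if z i = 0 then 0 else w$i * cmod (z i) powr r / (mu * s$i)) * y$i)"
      by (simp add: norm_mult powr_mult mult.assoc[symmetric] b_coeff y_def)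
    also have "\<dots> = (\<Sum>i | z i \<noteq> 0. w$i * cmod (z i) powr r * y$i / s$i) / mu"
      unfolding sum_divide_distrib by (rule sum.mono_neutral_cong_right) auto
    also have "\<dots> \<le> lam / mu"
      using lozanovskii[OF y] mu by (simp add: lam_def divide_right_mono)
    also have "\<dots> < 1" using mu by simp
    finally show ?thesis
      using r lattice_norm_nonneg[OF X] by (simp add: powr_less_1_iff)
  qed
  moreover have "z = (\<lambda>i. a i * b i)"
  proof -
    have "a i \<noteq> 0" if "z i \<noteq> 0" for i
      using s(2)[OF that] mu by (simp add: a_def root_vec_def)
    then show ?thesis by (auto simp: b_def fun_eq_iff)
  qed
  ultimately show ?thesis by blast
qed

lemma unit_ball_factors_if_concavify_additive:
  fixes X Y :: "('n::finite \<Rightarrow> complex) \<Rightarrow> real"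
  assumes X: "lattice_norm X" and Y: "lattice_norm Y" and r: "0 < r"
    and X_superadditive: "\<And>v u. 0 \<le> v \<Longrightarrow> 0 \<le> u \<Longrightarrow>
      concavify X r v + concavify X r u \<le> concavify X r (v + u)"
    and Y_subadditive: "\<And>v u. 0 \<le> v \<Longrightarrow> 0 \<le> u \<Longrightarrow>
      concavify Y r (v + u) \<le> concavify Y r v + concavify Y r u"
  shows "unit_ball_factors X Y"
  unfolding unit_ball_factors_def
proof (intro allI impI)
  fix z assume z: "X z < 1"
  define t :: "real^'n" where "t = (\<chi> i. cmod (z i) powr r)"
  have "0 \<le> t" by (simp add: t_def less_eq_vec_def)
  moreover have "concavify X r t < 1"
    unfolding t_def concavify_cmod_powr[OF X r]
    using z r lattice_norm_nonneg[OF X] by (simp add: powr_less_1_iff)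
  ultimately obtain w where w: "\<And>i. 0 < w$i" "inner w t < 1"
    "\<And>y. 0 \<le> y \<Longrightarrow> concavify X r y \<le> inner w y"
    using concavify_dominated_by_linear[OF X r X_superadditive] by blast
  define p where "p = w * t"
  have p_i: "p$i = w$i * cmod (z i) powr r" for i by (simp add: p_def t_def times_vec_def)
  have "0 \<le> p" using w(1) by (simp add: p_i less_eq_vec_def less_imp_le)
  have support: "0 < p$i \<longleftrightarrow> z i \<noteq> 0" for i
    using w(1)[of i] by (simp add: p_i zero_less_mult_iff)
  obtain s where s: "concavify Y r s \<le> 1" "\<And>i. 0 < p$i \<Longrightarrow> 0 < s$i"
    "\<And>y. 0 \<le> y \<Longrightarrow> concavify Y r y \<le> 1 \<Longrightarrow>
      (\<Sum>i | 0 < p$i. p$i * y$i / s$i) \<le> (\<Sum>i\<in>UNIV. p$i)"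
    using concavify_lozanovskii[OF Y r Y_subadditive \<open>0 \<le> p\<close>] by blast
  have lam: "(\<Sum>i\<in>UNIV. w$i * cmod (z i) powr r) < 1"
    using w(2) by (simp add: inner_vec_def t_def)
  have s_pos: "\<And>i. z i \<noteq> 0 \<Longrightarrow> 0 < s$i" using s(2) support by blast
  have lozanovskii: "(\<Sum>i | z i \<noteq> 0. w$i * cmod (z i) powr r * y$i / s$i)
      \<le> (\<Sum>i\<in>UNIV. w$i * cmod (z i) powr r)" if "0 \<le> y" "concavify Y r y \<le> 1" for y
    using s(3)[OF that] unfolding support by (simp add: p_i)
  show "\<exists>a b. Y a < 1 \<and> (\<forall>u. Y u < 1 \<longrightarrow> X (\<lambda>i. b i * u i) < 1) \<and> z = (\<lambda>i. a i * b i)"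
    by (rule factorization_from_dual_data[OF X Y r w(1) lam w(3) s(1) s_pos lozanovskii])
qed

section \<open>Unconditional constants of the monomials\<close>

lemma poly_eval_mult:
  "poly_eval c F (\<lambda>i. x i * y i) = poly_eval (\<lambda>\<alpha>. c \<alpha> * (\<Prod>i\<in>UNIV. y i ^ \<alpha> i)) F x"
  unfolding poly_eval_def
  by (rule sum.cong[OF refl]) (simp add: power_mult_distrib prod.distrib mult_ac)

lemma bdd_above_poly_eval_unit_ball:
  assumes N: "lattice_norm N"
  shows "bdd_above {cmod (poly_eval c F z) | z. N z < 1}"
proof -
  obtain C where C: "0 \<le> C" "\<And>x i. cmod (x i) \<le> C * N x"
    using lattice_norm_coords_bounded[OF N] by blast
  have "cmod (poly_eval c F z) \<le> (\<Sum>\<alpha>\<in>F. cmod (c \<alpha>) * (\<Prod>i\<in>UNIV. C ^ \<alpha> i))" if "N z < 1" for z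
  proof -
    have z_le: "cmod (z i) \<le> C" for i
      using C(2)[of z i] mult_left_le[of "N z" C] that C(1) lattice_norm_nonneg[OF N] by simp
    have "cmod (poly_eval c F z) \<le> (\<Sum>\<alpha>\<in>F. cmod (c \<alpha>) * (\<Prod>i\<in>UNIV. cmod (z i) ^ \<alpha> i))"
      unfolding poly_eval_def
      by (rule order_trans[OF norm_sum]) (simp add: norm_mult prod_norm[symmetric] norm_power)
    also have "\<dots> \<le> (\<Sum>\<alpha>\<in>F. cmod (c \<alpha>) * (\<Prod>i\<in>UNIV. C ^ \<alpha> i))"
      using z_le by (intro sum_mono mult_left_mono prod_mono conjI power_mono) auto
    finally show ?thesis .
  qed
  then show ?thesis by (intro bdd_aboveI) blast
qed

lemma poly_sup_upper:
  "lattice_norm N \<Longrightarrow> N z < 1 \<Longrightarrow> cmod (poly_eval c F z) \<le> poly_sup N c F"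
  unfolding poly_sup_def by (rule cSup_upper[OF _ bdd_above_poly_eval_unit_ball]) auto

lemma poly_sup_least:
  assumes N: "lattice_norm N" and B: "\<And>z. N z < 1 \<Longrightarrow> cmod (poly_eval c F z) \<le> B"
  shows "poly_sup N c F \<le> B"
  unfolding poly_sup_def
proof (rule cSup_least)
  have "N (\<lambda>_. 0) < 1" using lattice_norm_zero[OF N] by simp
  then show "{cmod (poly_eval c F z) |z. N z < 1} \<noteq> {}" by blast
qed (use B in auto)

lemma unconditional_bound_transfer:
  assumes X: "lattice_norm X" and Y: "lattice_norm Y" and factors: "unit_ball_factors X Y"
    and K: "0 \<le> K" "\<And>c. poly_sup Y (\<lambda>\<alpha>. \<epsilon> \<alpha> * c \<alpha>) F \<le> K * poly_sup Y c F"
  shows "poly_sup X (\<lambda>\<alpha>. \<epsilon> \<alpha> * c \<alpha>) F \<le> K * poly_sup X c F"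
proof (rule poly_sup_least[OF X])
  fix z assume "X z < 1"
  then obtain a b where ab: "Y a < 1" "\<And>u. Y u < 1 \<Longrightarrow> X (\<lambda>i. b i * u i) < 1"
    "z = (\<lambda>i. a i * b i)"
    using factors unfolding unit_ball_factors_def by blast
  define c' where "c' \<alpha> = c \<alpha> * (\<Prod>i\<in>UNIV. b i ^ \<alpha> i)" for \<alpha>
  have "cmod (poly_eval (\<lambda>\<alpha>. \<epsilon> \<alpha> * c \<alpha>) F z) = cmod (poly_eval (\<lambda>\<alpha>. \<epsilon> \<alpha> * c' \<alpha>) F a)"
    unfolding ab(3) poly_eval_mult by (simp add: c'_def mult_ac)
  also have "\<dots> \<le> poly_sup Y (\<lambda>\<alpha>. \<epsilon> \<alpha> * c' \<alpha>) F" by (rule poly_sup_upper[OF Y ab(1)])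
  also have "\<dots> \<le> K * poly_sup Y c' F" by (rule K(2))
  also have "\<dots> \<le> K * poly_sup X c F"
  proof (rule mult_left_mono[OF poly_sup_least[OF Y] K(1)])
    fix u assume "Y u < 1"
    have "poly_eval c' F u = poly_eval c F (\<lambda>i. u i * b i)"
      unfolding poly_eval_mult c'_def ..
    then show "cmod (poly_eval c' F u) \<le> poly_sup X c F"
      using poly_sup_upper[OF X ab(2)[OF \<open>Y u < 1\<close>]] by (simp add: mult.commute)
  qed
  finally show "cmod (poly_eval (\<lambda>\<alpha>. \<epsilon> \<alpha> * c \<alpha>) F z) \<le> K * poly_sup X c F" .
qed

lemma chi_mon_le_if_unit_ball_factors:
  assumes X: "lattice_norm X" and Y: "lattice_norm Y" and "unit_ball_factors X Y"
  shows "chi_mon X J \<le> chi_mon Y J"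
  unfolding chi_mon_def
proof (intro Inf_superset_mono image_mono subsetI)
  fix K assume K: "K \<in> {K. K \<ge> 0 \<and> (\<forall>F c \<epsilon>. finite F \<longrightarrow> F \<subseteq> J \<longrightarrow> (\<forall>\<alpha>. cmod (\<epsilon> \<alpha>) = 1) \<longrightarrow>
      poly_sup Y (\<lambda>\<alpha>. \<epsilon> \<alpha> * c \<alpha>) F \<le> K * poly_sup Y c F)}"
  then have "0 \<le> K" by simp
  have "poly_sup X (\<lambda>\<alpha>. \<epsilon> \<alpha> * c \<alpha>) F \<le> K * poly_sup X c F"
    if "finite F" "F \<subseteq> J" "\<forall>\<alpha>. cmod (\<epsilon> \<alpha>) = 1" for F c \<epsilon>
    using K that by (intro unconditional_bound_transfer[OF assms \<open>0 \<le> K\<close>]) auto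
  with \<open>0 \<le> K\<close> show "K \<in> {K. K \<ge> 0 \<and> (\<forall>F c \<epsilon>. finite F \<longrightarrow> F \<subseteq> J \<longrightarrow> (\<forall>\<alpha>. cmod (\<epsilon> \<alpha>) = 1) \<longrightarrow>
      poly_sup X (\<lambda>\<alpha>. \<epsilon> \<alpha> * c \<alpha>) F \<le> K * poly_sup X c F)}"
    by simp
qed

theorem theorem2p12:
  fixes X Y :: "('n::finite \<Rightarrow> complex) \<Rightarrow> real" and r :: real
    and J :: "('n \<Rightarrow> nat) set"
  assumes "1 < r"
    and "lattice_norm X" and "lattice_norm Y"
    and "concavity_const X r = 1" and "convexity_const Y r = 1"
  shows "chi_mon X J \<le> chi_mon Y J"
proof -
  note X = assms(2) and Y = assms(3)
  have r: "0 < r" using assms(1) by simp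
  have "unit_ball_factors X Y"
    using concavify_superadditive[OF X r assms(4)] concavify_subadditive[OF Y r assms(5)]
    by (rule unit_ball_factors_if_concavify_additive[OF X Y r])
  then show ?thesis by (rule chi_mon_le_if_unit_ball_factors[OF X Y])
qed

end
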